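(* Let $a,b\in C^0(\mathbb{R})$ be even and positive, and let $G\in C^0(\mathbb{R})$ be even with $G(s)\ge G(M)=0$ for all $s\in\mathbb{R}$ and $G(s)>0$ for $s\in[0,M)$, for some $M>0$. Let $m>0$ and for $L>0$ set $\Phi_m(L):=\inf_{u\in H^1_m((-L,L))}\mathcal{E}(u,(-L,L))$. The following are equivalent: (i) $\liminf_{L\to+\infty}\Phi_m(L)=0$; (ii) there exists a sequence of bounded intervals $J_n=[\alpha_n,\beta_n]\subset\mathbb{R}$ ($\alpha_n<\beta_n$) such that $\int_{J_n}\frac1a\to+\infty$ and $\int_{J_n}b\to0$.
   Context: $H^1_m((-L,L)):=\{u\in H^1((-L,L)):u(-L)=-m,\ u(L)=m\}$ and $\mathcal{E}(u,(-L,L)):=\int_{-L}^L\{\tfrac12(u')^2a(x)+G(u)b(x)\}\,dx$. *)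

theory Defs
  imports "HOL-Analysis.Analysis" "HOL-Library.Extended_Real"
begin

text \<open>One-dimensional Sobolev space H^1((-L,L)), identified (as usual) with its
  continuous representatives: u is in H^1 with weak derivative g iff g is in L^2(-L,L)
  and u(x) = u(-L) + integral from -L to x of g, for x in [-L,L].\<close>
definition H1_weak :: "real \<Rightarrow> (real \<Rightarrow> real) \<Rightarrow> (real \<Rightarrow> real) \<Rightarrow> bool" where
  "H1_weak L u g \<longleftrightarrow>
     g absolutely_integrable_on {-L..L} \<and>
     (\<lambda>x. (g x)\<^sup>2) integrable_on {-L..L} \<and>
     (\<forall>x\<in>{-L..L}. u x = u (-L) + integral {-L..x} g)"

definition H1m :: "real \<Rightarrow> real \<Rightarrow> (real \<Rightarrow> real) \<Rightarrow> (real \<Rightarrow> real) \<Rightarrow> bool" where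
  "H1m m L u g \<longleftrightarrow> H1_weak L u g \<and> u (-L) = - m \<and> u L = m"

definition energy :: "(real \<Rightarrow> real) \<Rightarrow> (real \<Rightarrow> real) \<Rightarrow> (real \<Rightarrow> real)
    \<Rightarrow> real \<Rightarrow> (real \<Rightarrow> real) \<Rightarrow> (real \<Rightarrow> real) \<Rightarrow> real" where
  "energy a b G L u g = integral {-L..L} (\<lambda>x. (1/2) * (g x)\<^sup>2 * a x + G (u x) * b x)"

definition Phi :: "(real \<Rightarrow> real) \<Rightarrow> (real \<Rightarrow> real) \<Rightarrow> (real \<Rightarrow> real) \<Rightarrow> real \<Rightarrow> real \<Rightarrow> real" where
  "Phi a b G m L = Inf {energy a b G L u g | u g. H1m m L u g}"

end

theory Submission
  imports Defs
begin

(*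
  If Phi_m(L) is small for some large L, a near-minimiser u, which runs from -m to m, must cross
  from 0 to delta = min m M / 2 on an interval J on which G(u) >= c > 0.  On J we have
  delta = integral of u' <= sqrt (2 E * integral of 1/a) and c * integral of b <= E, so J has
  large 1/a-length and small b-length.

  Conversely, by evenness the given intervals may be moved into [0, oo) at the cost of half of
  their 1/a-length.  For [alpha, beta] in [0, oo), take the profile on (-beta, beta) that is affine
  in the variable integral of 1/a, going from -m to M on [-beta, -alpha], equal to the zero M of G
  on [-alpha, alpha], and going from M to m on [alpha, beta].  Its energy is at most
  ((m + M)^2 + (m - M)^2) / (2 * integral of 1/a over [alpha, beta])
  + 2 * K * (integral of b over [alpha, beta]), where K bounds G on the range of the profile.
*)

lemma Liminf_at_top_ereal_eq_0_iff:
  fixes f :: "real \<Rightarrow> real"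
  assumes nonneg: "eventually (\<lambda>L. 0 \<le> f L) at_top"
  shows "Liminf at_top (\<lambda>L. ereal (f L)) = 0 \<longleftrightarrow> (\<forall>\<epsilon>>0. \<forall>T. \<exists>L\<ge>T. f L < \<epsilon>)"
proof
  assume lim: "Liminf at_top (\<lambda>L. ereal (f L)) = 0"
  show "\<forall>\<epsilon>>0. \<forall>T. \<exists>L\<ge>T. f L < \<epsilon>"
  proof (intro allI impI, rule ccontr)
    fix \<epsilon> T :: real
    assume "0 < \<epsilon>" and "\<not> (\<exists>L\<ge>T. f L < \<epsilon>)"
    then have "eventually (\<lambda>L. ereal \<epsilon> \<le> ereal (f L)) at_top"
      by (auto simp: eventually_at_top_linorder not_less)
    then have "ereal \<epsilon> \<le> Liminf at_top (\<lambda>L. ereal (f L))"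
      by (rule Liminf_bounded)
    with lim \<open>0 < \<epsilon>\<close> show False by simp
  qed
next
  assume small: "\<forall>\<epsilon>>0. \<forall>T. \<exists>L\<ge>T. f L < \<epsilon>"
  have "0 \<le> Liminf at_top (\<lambda>L. ereal (f L))"
    using nonneg by (intro Liminf_bounded) (auto elim: eventually_mono)
  moreover have "\<not> 0 < Liminf at_top (\<lambda>L. ereal (f L))"
  proof
    assume "0 < Liminf at_top (\<lambda>L. ereal (f L))"
    then obtain \<epsilon> where "0 < ereal \<epsilon>" "ereal \<epsilon> < Liminf at_top (\<lambda>L. ereal (f L))"
      using ereal_dense2 by blast
    then have "eventually (\<lambda>L. ereal \<epsilon> < ereal (f L)) at_top" and "\<epsilon> > 0"
      using le_Liminf_iff[of "Liminf at_top (\<lambda>L. ereal (f L))" at_top "\<lambda>L. ereal (f L)"]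
      by auto
    then show False
      using small by (fastforce simp: eventually_at_top_linorder)
  qed
  ultimately show "Liminf at_top (\<lambda>L. ereal (f L)) = 0" by simp
qed

lemma Liminf_at_top_ereal_eq_0_if_bounded_along:
  fixes f :: "real \<Rightarrow> real" and y e :: "nat \<Rightarrow> real"
  assumes "eventually (\<lambda>L. 0 \<le> f L) at_top" and y: "filterlim y at_top sequentially"
    and le: "eventually (\<lambda>n. f (y n) \<le> e n) sequentially" and e: "e \<longlonglongrightarrow> 0"
  shows "Liminf at_top (\<lambda>L. ereal (f L)) = 0"
  unfolding Liminf_at_top_ereal_eq_0_iff[OF assms(1)]
proof (intro allI impI)
  fix \<epsilon> T :: real assume "0 < \<epsilon>"
  have "eventually (\<lambda>n. T \<le> y n \<and> f (y n) \<le> e n \<and> e n < \<epsilon>) sequentially"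
    using y le order_tendstoD(2)[OF e \<open>0 < \<epsilon>\<close>]
    by (intro eventually_conj) (auto simp: filterlim_at_top)
  then obtain n where "T \<le> y n" "f (y n) < \<epsilon>"
    using eventually_happens'[of sequentially] by fastforce
  then show "\<exists>L\<ge>T. f L < \<epsilon>" by blast
qed

lemma interval_sequence_if_arbitrarily_good:
  fixes A B :: "real \<Rightarrow> real \<Rightarrow> real"
  assumes "0 < C"
    and good: "\<And>\<epsilon>. 0 < \<epsilon> \<Longrightarrow> \<exists>p q. p < q \<and> C / \<epsilon> \<le> A p q \<and> 0 \<le> B p q \<and> B p q \<le> D * \<epsilon>"
  shows "\<exists>\<alpha> \<beta> :: nat \<Rightarrow> real. (\<forall>n. \<alpha> n < \<beta> n) \<and>
    filterlim (\<lambda>n. A (\<alpha> n) (\<beta> n)) at_top sequentially \<and>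
    ((\<lambda>n. B (\<alpha> n) (\<beta> n)) \<longlongrightarrow> 0) sequentially"
proof -
  have "\<exists>p q. p < q \<and> real (Suc n) \<le> A p q \<and> 0 \<le> B p q \<and> B p q \<le> D * C / real (Suc n)" for n
    using good[of "C / real (Suc n)"] \<open>0 < C\<close> by auto
  then obtain \<alpha> \<beta> where \<alpha>\<beta>: "\<And>n. \<alpha> n < \<beta> n" "\<And>n. real (Suc n) \<le> A (\<alpha> n) (\<beta> n)"
    "\<And>n. 0 \<le> B (\<alpha> n) (\<beta> n)" "\<And>n. B (\<alpha> n) (\<beta> n) \<le> D * C / real (Suc n)"
    by metis
  have "filterlim (\<lambda>n. A (\<alpha> n) (\<beta> n)) at_top sequentially"
    by (rule filterlim_at_top_mono[OF filterlim_real_sequentially])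
      (use \<alpha>\<beta>(2) order_trans[OF _ \<alpha>\<beta>(2)] in auto)
  moreover have "((\<lambda>n. B (\<alpha> n) (\<beta> n)) \<longlongrightarrow> 0) sequentially"
  proof (rule tendsto_sandwich[of "\<lambda>_. 0" _ _ "\<lambda>n. D * C / real (Suc n)"])
    show "((\<lambda>n. D * C / real (Suc n)) \<longlongrightarrow> 0) sequentially"
      using LIMSEQ_Suc[OF lim_const_over_n[of "D * C"]] by simp
  qed (use \<alpha>\<beta> in auto)
  ultimately show ?thesis using \<alpha>\<beta>(1) by blast
qed

lemma integral_reflect_even:
  fixes f :: "real \<Rightarrow> real"
  assumes "\<And>x. f (-x) = f x"
  shows "integral {-y..-x} f = integral {x..y} f"
  using Henstock_Kurzweil_Integration.integral_reflect_real[of y x f] assms by simp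

lemma interval_in_halfline_if_even:
  fixes f h :: "real \<Rightarrow> real"
  assumes f: "continuous_on UNIV f" "\<And>t. f (-t) = f t" "\<And>t. 0 \<le> f t"
    and h: "continuous_on UNIV h" "\<And>t. h (-t) = h t" "\<And>t. 0 \<le> h t"
    and "x < y"
  obtains x' y' where "0 \<le> x'" "x' < y'" "integral {x..y} f / 2 \<le> integral {x'..y'} f"
    "integral {x'..y'} h \<le> integral {x..y} h"
proof -
  have fi: "f integrable_on {p..q}" and hi: "h integrable_on {p..q}" for p q
    by (auto intro: integrable_continuous_interval continuous_on_subset f h)
  have f_nonneg: "0 \<le> integral {p..q} f" and h_nonneg: "0 \<le> integral {p..q} h" for p q
    by (auto intro: integral_nonneg fi hi f h)
  consider "0 \<le> x" | "y \<le> 0" | "x < 0" "0 < y" by linarith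
  then show thesis
  proof cases
    case 1
    then show thesis using that \<open>x < y\<close> f_nonneg[of x y] by auto
  next
    case 2
    then show thesis
      using that[of "-y" "-x"] \<open>x < y\<close> f_nonneg[of x y]
      by (simp add: integral_reflect_even f(2) h(2))
  next
    case 3
    have split_f: "integral {x..0} f + integral {0..y} f = integral {x..y} f"
      and split_h: "integral {x..0} h + integral {0..y} h = integral {x..y} h"
      using 3 by (auto intro!: Henstock_Kurzweil_Integration.integral_combine fi hi)
    show thesis
    proof (cases "integral {x..y} f / 2 \<le> integral {0..y} f")
      case True
      then show thesis using that[of 0 y] 3 split_h h_nonneg[of x 0] by auto
    next
      case False
      then show thesis
        using that[of 0 "-x"] 3 split_f split_h h_nonneg[of 0 y]
        by (simp add: integral_reflect_even[of f 0 x, simplified]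
            integral_reflect_even[of h 0 x, simplified] f(2) h(2))
    qed
  qed
qed

lemma halfline_interval_sequence_if_even:
  fixes f h :: "real \<Rightarrow> real" and \<alpha> \<beta> :: "nat \<Rightarrow> real"
  assumes f: "continuous_on UNIV f" "\<And>t. f (-t) = f t" "\<And>t. 0 \<le> f t"
    and h: "continuous_on UNIV h" "\<And>t. h (-t) = h t" "\<And>t. 0 \<le> h t"
    and "\<And>n. \<alpha> n < \<beta> n" and A: "filterlim (\<lambda>n. integral {\<alpha> n..\<beta> n} f) at_top sequentially"
    and B: "(\<lambda>n. integral {\<alpha> n..\<beta> n} h) \<longlonglongrightarrow> 0"
  obtains x y :: "nat \<Rightarrow> real" where "\<And>n. 0 \<le> x n" "\<And>n. x n < y n"
    "filterlim y at_top sequentially" "filterlim (\<lambda>n. integral {x n..y n} f) at_top sequentially"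
    "(\<lambda>n. integral {x n..y n} h) \<longlonglongrightarrow> 0"
proof -
  have "\<exists>x' y'. 0 \<le> x' \<and> x' < y' \<and> integral {\<alpha> n..\<beta> n} f / 2 \<le> integral {x'..y'} f
      \<and> integral {x'..y'} h \<le> integral {\<alpha> n..\<beta> n} h" for n
    using interval_in_halfline_if_even[OF f h \<open>\<And>n. \<alpha> n < \<beta> n\<close>] by blast
  then obtain x y where xy: "\<And>n. 0 \<le> x n" "\<And>n. x n < y n"
    and f_ge: "\<And>n. integral {\<alpha> n..\<beta> n} f / 2 \<le> integral {x n..y n} f"
    and h_le: "\<And>n. integral {x n..y n} h \<le> integral {\<alpha> n..\<beta> n} h"
    by metis
  have f_top: "filterlim (\<lambda>n. integral {x n..y n} f) at_top sequentially"
    unfolding filterlim_at_top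
  proof
    fix Z
    show "eventually (\<lambda>n. Z \<le> integral {x n..y n} f) sequentially"
      using A[unfolded filterlim_at_top, rule_format, of "2 * Z"]
    proof eventually_elim
      case (elim n)
      then show ?case using f_ge[of n] by linarith
    qed
  qed
  have "(\<lambda>n. integral {x n..y n} h) \<longlonglongrightarrow> 0"
    using h by (intro tendsto_sandwich[OF _ _ tendsto_const B] always_eventually allI
        integral_nonneg
        integrable_continuous_interval continuous_on_subset[OF h(1)] h_le) auto
  moreover have "filterlim y at_top sequentially"
    unfolding filterlim_at_top
  proof
    fix T
    have "eventually (\<lambda>n. integral {0..max T 0} f < integral {x n..y n} f) sequentially"
      using f_top unfolding filterlim_at_top_dense by blast
    then show "eventually (\<lambda>n. T \<le> y n) sequentially"
    proof eventually_elim
      case (elim n)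
      show ?case
      proof (rule ccontr)
        assume "\<not> T \<le> y n"
        then have "integral {x n..y n} f \<le> integral {0..max T 0} f"
          using xy[of n] f by (intro integral_subset_le integrable_continuous_interval
              continuous_on_subset[OF f(1)]) auto
        with elim show False by linarith
      qed
    qed
  qed
  ultimately show thesis using that xy f_top by blast
qed

lemmas integrable_on_mult_left_real = integrable_on_cmult_left[where 'b=real, simplified]

lemma integral_le_weighted_AM_GM:
  fixes g a :: "real \<Rightarrow> real"
  assumes g: "g integrable_on S" and ga: "(\<lambda>x. (1/2) * (g x)\<^sup>2 * a x) integrable_on S"
    and ia: "(\<lambda>x. 1 / a x) integrable_on S" and a: "\<And>x. x \<in> S \<Longrightarrow> 0 < a x" and "0 < t"
  shows "integral S g
    \<le> t * integral S (\<lambda>x. (1/2) * (g x)\<^sup>2 * a x) + integral S (\<lambda>x. 1 / a x) / (2 * t)"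
proof -
  have pointwise: "g x \<le> t * ((1/2) * (g x)\<^sup>2 * a x) + (1 / a x) / (2 * t)" if "x \<in> S" for x
  proof -
    have "2 * t * a x * g x \<le> (t * a x * g x)\<^sup>2 + 1"
      using sum_squares_bound[of "t * a x * g x" 1] by (simp add: algebra_simps)
    then show ?thesis
      using a[OF that] \<open>0 < t\<close> by (simp add: field_simps power2_eq_square)
  qed
  have "integral S g
      \<le> integral S (\<lambda>x. t * ((1/2) * (g x)\<^sup>2 * a x) + (1 / a x) / (2 * t))"
    using pointwise by (intro integral_le g integrable_add integrable_on_mult_left_real
        integrable_on_divide ga ia) auto
  also have "\<dots> = t * integral S (\<lambda>x. (1/2) * (g x)\<^sup>2 * a x) + integral S (\<lambda>x. 1 / a x) / (2 * t)"
    using ga ia by (simp only: integral_add integrable_on_mult_left_real integrable_on_divide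
        integral_mult_right integral_divide)
  finally show ?thesis .
qed

lemma crossing_subinterval:
  fixes u :: "real \<Rightarrow> real"
  assumes u: "continuous_on {p..q} u" and "p \<le> q" "u p \<le> 0" "0 < \<delta>" "\<delta> \<le> u q"
  obtains \<alpha> \<beta> where "p \<le> \<alpha>" "\<alpha> < \<beta>" "\<beta> \<le> q" "u \<alpha> = 0" "u \<beta> = \<delta>"
    "\<And>x. x \<in> {\<alpha>..\<beta>} \<Longrightarrow> 0 \<le> u x \<and> u x \<le> \<delta>"
proof -
  \<comment> \<open>\<beta> is the first point where u reaches \<delta>, and \<alpha> the last zero of u before \<beta>.\<close>
  define A where "A = {p..q} \<inter> u -` {\<delta>..}"
  have "compact A"
    unfolding A_def using continuous_closed_preimage[OF u closed_atLeastAtMost closed_atLeast]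
    by (simp add: compact_eq_bounded_closed bounded_Int)
  moreover have "q \<in> A" using assms unfolding A_def by auto
  ultimately obtain \<beta> where \<beta>: "\<beta> \<in> A" and \<beta>_least: "\<And>t. t \<in> A \<Longrightarrow> \<beta> \<le> t"
    using compact_attains_inf[of A] by blast
  have "p \<le> \<beta>" "\<beta> \<le> q" "\<delta> \<le> u \<beta>" using \<beta> unfolding A_def by auto
  have u\<beta>: "continuous_on {p..\<beta>} u" using u \<open>\<beta> \<le> q\<close> by (auto intro: continuous_on_subset)
  define B where "B = {p..\<beta>} \<inter> u -` {..0}"
  have "compact B"
    unfolding B_def using continuous_closed_preimage[OF u\<beta> closed_atLeastAtMost closed_atMost]
    by (simp add: compact_eq_bounded_closed bounded_Int)
  moreover have "p \<in> B" using assms \<open>p \<le> \<beta>\<close> unfolding B_def by auto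
  ultimately obtain \<alpha> where \<alpha>: "\<alpha> \<in> B" and \<alpha>_greatest: "\<And>t. t \<in> B \<Longrightarrow> t \<le> \<alpha>"
    using compact_attains_sup[of B] by blast
  have "p \<le> \<alpha>" "\<alpha> \<le> \<beta>" "u \<alpha> \<le> 0" using \<alpha> unfolding B_def by auto
  have "\<alpha> \<noteq> \<beta>" using \<open>u \<alpha> \<le> 0\<close> \<open>\<delta> \<le> u \<beta>\<close> \<open>0 < \<delta>\<close> by auto
  with \<open>\<alpha> \<le> \<beta>\<close> have "\<alpha> < \<beta>" by simp
  obtain y where "p \<le> y" "y \<le> \<beta>" "u y = \<delta>"
    using IVT'[OF _ \<open>\<delta> \<le> u \<beta>\<close> \<open>p \<le> \<beta>\<close> u\<beta>] assms by auto
  then have "y \<in> A" using \<open>\<beta> \<le> q\<close> unfolding A_def by auto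
  with \<beta>_least \<open>y \<le> \<beta>\<close> \<open>u y = \<delta>\<close> have "u \<beta> = \<delta>" by force
  have u\<alpha>\<beta>: "continuous_on {\<alpha>..\<beta>} u" using u\<beta> \<open>p \<le> \<alpha>\<close> by (auto intro: continuous_on_subset)
  obtain z where "\<alpha> \<le> z" "z \<le> \<beta>" "u z = 0"
    using IVT'[OF \<open>u \<alpha> \<le> 0\<close> _ \<open>\<alpha> \<le> \<beta>\<close> u\<alpha>\<beta>] \<open>\<delta> \<le> u \<beta>\<close> \<open>0 < \<delta>\<close> by auto
  then have "z \<in> B" using \<open>p \<le> \<alpha>\<close> unfolding B_def by auto
  with \<alpha>_greatest \<open>\<alpha> \<le> z\<close> \<open>u z = 0\<close> have "u \<alpha> = 0" by force
  have "0 \<le> u x \<and> u x \<le> \<delta>" if x: "x \<in> {\<alpha>..\<beta>}" for x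
  proof
    show "u x \<le> \<delta>"
    proof (cases "x = \<beta>")
      case False
      with x \<beta>_least have "x \<notin> A" by force
      with x \<open>p \<le> \<alpha>\<close> \<open>\<beta> \<le> q\<close> show ?thesis unfolding A_def by auto
    qed (use \<open>u \<beta> = \<delta>\<close> in simp)
    show "0 \<le> u x"
    proof (cases "x = \<alpha>")
      case False
      with x \<alpha>_greatest have "x \<notin> B" by force
      with x \<open>p \<le> \<alpha>\<close> show ?thesis unfolding B_def by auto
    qed (use \<open>u \<alpha> = 0\<close> in simp)
  qed
  with that \<open>p \<le> \<alpha>\<close> \<open>\<alpha> < \<beta>\<close> \<open>\<beta> \<le> q\<close> \<open>u \<alpha> = 0\<close> \<open>u \<beta> = \<delta>\<close> show thesis by blast
qed

lemma add_mult_diff_in_closed_segment: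
  fixes p q s :: real
  assumes "0 \<le> s" "s \<le> 1"
  shows "p + s * (q - p) \<in> closed_segment p q"
  unfolding in_segment using assms by (intro exI[of _ s]) (simp add: algebra_simps)

lemma has_real_derivative_min_const:
  fixes f :: "real \<Rightarrow> real"
  assumes "y \<noteq> p" and "y < p \<Longrightarrow> (f has_real_derivative f') (at y)"
  shows "((\<lambda>x. f (min x p)) has_real_derivative (if y < p then f' else 0)) (at y)"
proof (cases "y < p")
  case True
  show ?thesis
    by (rule has_field_derivative_transform_within_open[of f _ _ "{..<p}"])
      (use True assms in auto)
next
  case False
  with assms have "p < y" by simp
  show ?thesis
    by (rule has_field_derivative_transform_within_open[of "\<lambda>_. f p" _ _ "{p<..}"])
      (use False \<open>p < y\<close> in auto)
qed

lemma has_real_derivative_max_const: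
  fixes f :: "real \<Rightarrow> real"
  assumes "y \<noteq> p" and "p < y \<Longrightarrow> (f has_real_derivative f') (at y)"
  shows "((\<lambda>x. f (max x p)) has_real_derivative (if p < y then f' else 0)) (at y)"
proof (cases "p < y")
  case True
  show ?thesis
    by (rule has_field_derivative_transform_within_open[of f _ _ "{p<..}"])
      (use True assms in auto)
next
  case False
  with assms have "y < p" by simp
  show ?thesis
    by (rule has_field_derivative_transform_within_open[of "\<lambda>_. f p" _ _ "{..<p}"])
      (use False \<open>y < p\<close> in auto)
qed

lemma H1_weak_integrable_deriv:
  assumes "H1_weak L u g"
  shows "g integrable_on {-L..L}"
  using assms absolutely_integrable_on_def unfolding H1_weak_def by blast

lemma H1_weak_square_integrable:
  assumes "H1_weak L u g"
  shows "(\<lambda>x. (g x)\<^sup>2) integrable_on {-L..L}"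
  using assms unfolding H1_weak_def by blast

lemma H1_weak_continuous_on:
  assumes "H1_weak L u g"
  shows "continuous_on {-L..L} u"
proof -
  have "continuous_on {-L..L} (\<lambda>x. u (-L) + integral {-L..x} g)"
    by (intro continuous_intros indefinite_integral_continuous_1 H1_weak_integrable_deriv[OF assms])
  moreover have "u (-L) + integral {-L..x} g = u x" if "x \<in> {-L..L}" for x
    using assms that unfolding H1_weak_def by (metis (no_types))
  ultimately show ?thesis
    by (rule continuous_on_eq)
qed

lemma H1_weak_integral_eq:
  assumes "H1_weak L u g" "-L \<le> x" "x \<le> y" "y \<le> L"
  shows "integral {x..y} g = u y - u x"
proof -
  have "g integrable_on {-L..y}"
    using assms by (intro integrable_subinterval_real[OF H1_weak_integrable_deriv[OF assms(1)]]) auto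
  then have "integral {-L..x} g + integral {x..y} g = integral {-L..y} g"
    using assms by (intro Henstock_Kurzweil_Integration.integral_combine) auto
  moreover have "x \<in> {-L..L}" "y \<in> {-L..L}"
    using assms(2-4) by auto
  then have "u x = u (-L) + integral {-L..x} g" "u y = u (-L) + integral {-L..y} g"
    using assms(1) unfolding H1_weak_def by blast+
  ultimately show ?thesis by linarith
qed

lemma H1_weak_if_piecewise_derivative:
  fixes u g :: "real \<Rightarrow> real"
  assumes "0 \<le> L" and u: "continuous_on {-L..L} u" and "finite S"
    and deriv: "\<And>x. x \<in> {-L<..<L} - S \<Longrightarrow> (u has_real_derivative g x) (at x)"
    and bound: "\<And>x. x \<in> {-L..L} \<Longrightarrow> \<bar>g x\<bar> \<le> B"
  shows "H1_weak L u g"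
proof -
  have ftc: "(g has_integral (u x - u (-L))) {-L..x}" if "x \<in> {-L..L}" for x
  proof (rule fundamental_theorem_of_calculus_interior_strong[OF \<open>finite S\<close>])
    show "continuous_on {-L..x} u" using u that by (auto intro: continuous_on_subset)
  qed (use that deriv in \<open>auto simp: has_real_derivative_iff_has_vector_derivative\<close>)
  have gi: "g integrable_on {-L..L}"
    using ftc[of L] \<open>0 \<le> L\<close> by (auto simp: integrable_on_def)
  have gai: "g absolutely_integrable_on {-L..L}"
    using bound by (intro absolutely_integrable_integrable_bound[OF _ gi integrable_const_ivl]) auto
  have "(\<lambda>x. g x * g x) absolutely_integrable_on {-L..L}"
  proof (rule absolutely_integrable_bounded_measurable_product_real[OF _ _ _ gai])
    show "g \<in> borel_measurable (lebesgue_on {-L..L})"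
      by (rule absolutely_integrable_imp_borel_measurable[OF gai]) simp
    show "bounded (g ` {-L..L})"
      using bound by (auto simp: bounded_iff intro!: exI[of _ B])
  qed simp
  then have "(\<lambda>x. (g x)\<^sup>2) integrable_on {-L..L}"
    by (simp add: power2_eq_square absolutely_integrable_on_def)
  moreover have "u x = u (-L) + integral {-L..x} g" if "x \<in> {-L..L}" for x
    using integral_unique[OF ftc[OF that]] by simp
  ultimately show ?thesis
    unfolding H1_weak_def using gai by blast
qed

lemma H1m_linear:
  assumes "0 < L"
  shows "H1m m L (\<lambda>x. m * x / L) (\<lambda>x. m / L)"
  using assms unfolding H1m_def H1_weak_def by (auto simp: field_simps)

locale weighted_energy =
  fixes a b G :: "real \<Rightarrow> real"
  assumes a_cont: "continuous_on UNIV a" and b_cont: "continuous_on UNIV b"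
    and G_cont: "continuous_on UNIV G"
    and a_pos: "\<And>x. 0 < a x" and b_pos: "\<And>x. 0 < b x" and G_nonneg: "\<And>s. 0 \<le> G s"
begin

lemma continuous_on_inverse_a: "continuous_on S (\<lambda>x. 1 / a x)"
proof -
  have "a x \<noteq> 0" for x using a_pos[of x] by simp
  then show ?thesis by (intro continuous_intros continuous_on_subset[OF a_cont]) auto
qed

lemma integrable_inverse_a: "(\<lambda>x. 1 / a x) integrable_on {p..q}"
  by (rule integrable_continuous_interval[OF continuous_on_inverse_a])

lemma integrable_b: "b integrable_on {p..q}"
  by (rule integrable_continuous_interval[OF continuous_on_subset[OF b_cont]]) simp

lemma integral_inverse_a_nonneg: "0 \<le> integral {p..q} (\<lambda>x. 1 / a x)"
  by (rule integral_nonneg[OF integrable_inverse_a]) (simp add: less_imp_le[OF a_pos])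

lemma integral_b_nonneg: "0 \<le> integral {p..q} b"
  by (rule integral_nonneg[OF integrable_b]) (simp add: less_imp_le[OF b_pos])

lemma kinetic_integrable:
  assumes "H1_weak L u g"
  shows "(\<lambda>x. (1/2) * (g x)\<^sup>2 * a x) integrable_on {-L..L}"
proof -
  have "(\<lambda>x. (g x)\<^sup>2) absolutely_integrable_on {-L..L}"
    using H1_weak_square_integrable[OF assms] by (rule nonnegative_absolutely_integrable_1) simp
  moreover have half_a: "continuous_on {-L..L} (\<lambda>x. (1/2) * a x)"
    by (intro continuous_intros continuous_on_subset[OF a_cont]) simp
  ultimately have "(\<lambda>x. ((1/2) * a x) * (g x)\<^sup>2) absolutely_integrable_on {-L..L}"
    by (intro absolutely_integrable_bounded_measurable_product_real
        continuous_imp_measurable_on_sets_lebesgue compact_imp_bounded compact_continuous_image)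
      auto
  then show ?thesis
    by (simp add: absolutely_integrable_on_def mult.commute mult.left_commute)
qed

lemma potential_integrable:
  assumes "H1_weak L u g"
  shows "(\<lambda>x. G (u x) * b x) integrable_on {-L..L}"
  by (intro integrable_continuous_interval continuous_intros
      continuous_on_compose2[OF G_cont H1_weak_continuous_on[OF assms]]
      continuous_on_subset[OF b_cont]) auto

lemma energy_eq:
  assumes "H1_weak L u g"
  shows "energy a b G L u g
    = integral {-L..L} (\<lambda>x. (1/2) * (g x)\<^sup>2 * a x) + integral {-L..L} (\<lambda>x. G (u x) * b x)"
  unfolding energy_def using kinetic_integrable[OF assms] potential_integrable[OF assms]
  by (rule integral_add)

lemma kinetic_nonneg: "0 \<le> (1/2) * (g x)\<^sup>2 * a x"
  using a_pos[of x] by simp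

lemma potential_nonneg: "0 \<le> G (u x) * b x"
  using G_nonneg b_pos[of x] by (simp add: less_imp_le)

lemma energy_nonneg:
  assumes "H1_weak L u g"
  shows "0 \<le> energy a b G L u g"
  unfolding energy_def
  by (rule integral_nonneg[OF integrable_add[OF kinetic_integrable[OF assms]
        potential_integrable[OF assms]]])
    (rule add_nonneg_nonneg[OF kinetic_nonneg potential_nonneg])

lemma integral_energy_terms_le_energy:
  assumes H1: "H1_weak L u g" and sub: "{p..q} \<subseteq> {-L..L}"
  shows "integral {p..q} (\<lambda>x. (1/2) * (g x)\<^sup>2 * a x) \<le> energy a b G L u g"
    and "integral {p..q} (\<lambda>x. G (u x) * b x) \<le> energy a b G L u g"
proof -
  let ?kin = "\<lambda>x. (1/2) * (g x)\<^sup>2 * a x" and ?pot = "\<lambda>x. G (u x) * b x"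
  have "integral {p..q} ?kin \<le> integral {-L..L} ?kin"
    using integrable_subinterval_real[OF kinetic_integrable[OF H1] sub]
      kinetic_integrable[OF H1] sub
    by (intro integral_subset_le ballI kinetic_nonneg)
  moreover have "integral {p..q} ?pot \<le> integral {-L..L} ?pot"
    using integrable_subinterval_real[OF potential_integrable[OF H1] sub]
      potential_integrable[OF H1] sub
    by (intro integral_subset_le ballI potential_nonneg)
  moreover have "0 \<le> integral {-L..L} ?kin" "0 \<le> integral {-L..L} ?pot"
    by (intro integral_nonneg kinetic_integrable[OF H1] potential_integrable[OF H1]
        kinetic_nonneg potential_nonneg)+
  ultimately show "integral {p..q} ?kin \<le> energy a b G L u g"
    "integral {p..q} ?pot \<le> energy a b G L u g"
    using energy_eq[OF H1] by linarith+
qed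

lemma energies_nonempty: "0 < L \<Longrightarrow> {energy a b G L u g | u g. H1m m L u g} \<noteq> {}"
  using H1m_linear by blast

lemma Phi_nonneg:
  assumes "0 < L"
  shows "0 \<le> Phi a b G m L"
  unfolding Phi_def
proof (rule cInf_greatest[OF energies_nonempty[OF assms]])
  fix e assume "e \<in> {energy a b G L u g | u g. H1m m L u g}"
  then show "0 \<le> e" using energy_nonneg unfolding H1m_def by blast
qed

lemma Phi_le_energy:
  assumes "H1m m L u g"
  shows "Phi a b G m L \<le> energy a b G L u g"
  unfolding Phi_def
proof (rule cInf_lower)
  show "energy a b G L u g \<in> {energy a b G L u g | u g. H1m m L u g}"
    using assms by blast
  show "bdd_below {energy a b G L u g | u g. H1m m L u g}"
    using energy_nonneg unfolding bdd_below_def H1m_def by blast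
qed

lemma Phi_less_imp_energy_less:
  assumes "0 < L" "Phi a b G m L < y"
  obtains u g where "H1m m L u g" "energy a b G L u g < y"
  using cInf_lessD[OF energies_nonempty[OF assms(1)]] assms(2) that unfolding Phi_def by blast

lemma eventually_Phi_nonneg: "eventually (\<lambda>L. 0 \<le> Phi a b G m L) at_top"
  by (rule eventually_at_top_linorderI[of 1]) (simp add: Phi_nonneg)

lemma crossing_interval_if_energy_less:
  assumes "0 < L" and H: "H1m m L u g" and E: "energy a b G L u g < \<epsilon>"
    and "0 < \<delta>" "\<delta> \<le> m" and "0 < c" and G_ge: "\<And>s. 0 \<le> s \<Longrightarrow> s \<le> \<delta> \<Longrightarrow> c \<le> G s"
  obtains \<alpha> \<beta> where "\<alpha> < \<beta>" "\<delta>\<^sup>2 / (2 * \<epsilon>) \<le> integral {\<alpha>..\<beta>} (\<lambda>x. 1 / a x)"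
    "integral {\<alpha>..\<beta>} b \<le> \<epsilon> / c"
proof -
  have H1: "H1_weak L u g" and "u (-L) = -m" "u L = m"
    using H unfolding H1m_def by auto
  have "-L \<le> L" "u (-L) \<le> 0" "\<delta> \<le> u L"
    using \<open>0 < L\<close> \<open>0 < \<delta>\<close> \<open>\<delta> \<le> m\<close> \<open>u (-L) = -m\<close> \<open>u L = m\<close> by auto
  then obtain \<alpha> \<beta> where "-L \<le> \<alpha>" "\<alpha> < \<beta>" "\<beta> \<le> L" "u \<alpha> = 0" "u \<beta> = \<delta>"
    and u_range: "\<And>x. x \<in> {\<alpha>..\<beta>} \<Longrightarrow> 0 \<le> u x \<and> u x \<le> \<delta>"
    using crossing_subinterval[OF H1_weak_continuous_on[OF H1] _ _ \<open>0 < \<delta>\<close>] by blast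
  have sub: "{\<alpha>..\<beta>} \<subseteq> {-L..L}" using \<open>-L \<le> \<alpha>\<close> \<open>\<beta> \<le> L\<close> by auto
  let ?kin = "\<lambda>x. (1/2) * (g x)\<^sup>2 * a x" and ?pot = "\<lambda>x. G (u x) * b x"
  have kin_int: "?kin integrable_on {\<alpha>..\<beta>}" and pot_int: "?pot integrable_on {\<alpha>..\<beta>}"
    using kinetic_integrable[OF H1] potential_integrable[OF H1] sub
    by (auto intro: integrable_subinterval_real)
  have kin: "integral {\<alpha>..\<beta>} ?kin < \<epsilon>" and pot: "integral {\<alpha>..\<beta>} ?pot < \<epsilon>"
    using integral_energy_terms_le_energy[OF H1 sub] E by linarith+
  have "\<epsilon> > 0" using energy_nonneg[OF H1] E by linarith
  have "c * integral {\<alpha>..\<beta>} b = integral {\<alpha>..\<beta>} (\<lambda>x. c * b x)" by simp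
  also have "\<dots> \<le> integral {\<alpha>..\<beta>} ?pot"
    using u_range G_ge b_pos
    by (intro integral_le integrable_on_mult_left_real integrable_b pot_int)
      (simp add: mult_right_mono less_imp_le)
  finally have "integral {\<alpha>..\<beta>} b \<le> \<epsilon> / c"
    using pot \<open>0 < c\<close> by (simp add: field_simps)
  \<comment> \<open>the weight that balances the two terms of the AM-GM bound\<close>
  define t where "t = \<delta> / (2 * \<epsilon>)"
  have "0 < t" unfolding t_def using \<open>0 < \<delta>\<close> \<open>0 < \<epsilon>\<close> by simp
  have "\<delta> = integral {\<alpha>..\<beta>} g"
    using H1_weak_integral_eq[OF H1] \<open>-L \<le> \<alpha>\<close> \<open>\<alpha> < \<beta>\<close> \<open>\<beta> \<le> L\<close> \<open>u \<alpha> = 0\<close> \<open>u \<beta> = \<delta>\<close> by simp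
  also have "\<dots> \<le> t * integral {\<alpha>..\<beta>} ?kin + integral {\<alpha>..\<beta>} (\<lambda>x. 1 / a x) / (2 * t)"
    using integrable_subinterval_real[OF H1_weak_integrable_deriv[OF H1] sub]
    by (intro integral_le_weighted_AM_GM kin_int integrable_inverse_a a_pos \<open>0 < t\<close>)
  also have "\<dots> \<le> \<delta> / 2 + \<epsilon> / \<delta> * integral {\<alpha>..\<beta>} (\<lambda>x. 1 / a x)"
    using kin \<open>0 < t\<close> \<open>0 < \<delta>\<close> \<open>0 < \<epsilon>\<close> unfolding t_def by (simp add: field_simps)
  finally have "\<delta>\<^sup>2 / (2 * \<epsilon>) \<le> integral {\<alpha>..\<beta>} (\<lambda>x. 1 / a x)"
    using \<open>0 < \<delta>\<close> \<open>0 < \<epsilon>\<close> by (simp add: field_simps power2_eq_square)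
  with that \<open>\<alpha> < \<beta>\<close> \<open>integral {\<alpha>..\<beta>} b \<le> \<epsilon> / c\<close> show thesis by blast
qed

lemma intervals_if_Liminf_Phi_eq_0:
  assumes "0 < m" "0 < M" and G_pos: "\<And>s. 0 \<le> s \<Longrightarrow> s < M \<Longrightarrow> 0 < G s"
    and "Liminf at_top (\<lambda>L. ereal (Phi a b G m L)) = 0"
  shows "\<exists>\<alpha> \<beta> :: nat \<Rightarrow> real. (\<forall>n. \<alpha> n < \<beta> n) \<and>
    filterlim (\<lambda>n. integral {\<alpha> n..\<beta> n} (\<lambda>x. 1 / a x)) at_top sequentially \<and>
    ((\<lambda>n. integral {\<alpha> n..\<beta> n} b) \<longlongrightarrow> 0) sequentially"
proof -
  define \<delta> where "\<delta> = min m M / 2"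
  have "0 < \<delta>" "\<delta> \<le> m" "\<delta> < M" unfolding \<delta>_def using assms by auto
  obtain s\<^sub>0 where "s\<^sub>0 \<in> {0..\<delta>}" and s\<^sub>0_min: "\<And>s. s \<in> {0..\<delta>} \<Longrightarrow> G s\<^sub>0 \<le> G s"
    using continuous_attains_inf[of "{0..\<delta>}" G] continuous_on_subset[OF G_cont] \<open>0 < \<delta>\<close> by force
  have "0 < G s\<^sub>0" using G_pos \<open>s\<^sub>0 \<in> {0..\<delta>}\<close> \<open>\<delta> < M\<close> by simp
  have Phi_small: "\<forall>\<epsilon>>0. \<forall>T. \<exists>L\<ge>T. Phi a b G m L < \<epsilon>"
    using assms(4) Liminf_at_top_ereal_eq_0_iff[OF eventually_Phi_nonneg] by blast
  show ?thesis
  proof (rule interval_sequence_if_arbitrarily_good[of "\<delta>\<^sup>2 / 2" _ _ "1 / G s\<^sub>0"])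
    show "0 < \<delta>\<^sup>2 / 2" using \<open>0 < \<delta>\<close> by simp
    fix \<epsilon> :: real assume "0 < \<epsilon>"
    then obtain L where "1 \<le> L" "Phi a b G m L < \<epsilon>" using Phi_small by blast
    moreover from this have "0 < L" by simp
    ultimately obtain u g where "H1m m L u g" "energy a b G L u g < \<epsilon>"
      using Phi_less_imp_energy_less by blast
    moreover have "\<And>s. 0 \<le> s \<Longrightarrow> s \<le> \<delta> \<Longrightarrow> G s\<^sub>0 \<le> G s" using s\<^sub>0_min by simp
    ultimately obtain \<alpha> \<beta> where "\<alpha> < \<beta>" "\<delta>\<^sup>2 / (2 * \<epsilon>) \<le> integral {\<alpha>..\<beta>} (\<lambda>x. 1 / a x)"
      "integral {\<alpha>..\<beta>} b \<le> \<epsilon> / G s\<^sub>0"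
      using crossing_interval_if_energy_less[OF \<open>0 < L\<close> _ _ \<open>0 < \<delta>\<close> \<open>\<delta> \<le> m\<close> \<open>0 < G s\<^sub>0\<close>]
      by blast
    then show "\<exists>p q. p < q \<and> \<delta>\<^sup>2 / 2 / \<epsilon> \<le> integral {p..q} (\<lambda>x. 1 / a x) \<and>
        0 \<le> integral {p..q} b \<and> integral {p..q} b \<le> 1 / G s\<^sub>0 * \<epsilon>"
      using integral_b_nonneg by auto
  qed
qed

lemma has_real_derivative_integral_inverse_a:
  assumes "p < y"
  shows "((\<lambda>x. integral {p..x} (\<lambda>t. 1 / a t)) has_real_derivative 1 / a y) (at y)"
proof -
  have "((\<lambda>x. integral {p..x} (\<lambda>t. 1 / a t)) has_real_derivative 1 / a y) (at y within {p..y + 1})"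
    using assms by (intro integral_has_real_derivative continuous_on_inverse_a) auto
  then show ?thesis using at_within_Icc_at[of p y "y + 1"] assms by simp
qed

lemma H1_weak_clamped_primitive:
  fixes \<alpha> \<beta> c\<^sub>0 c\<^sub>1 c\<^sub>2 :: real
  defines "F \<equiv> \<lambda>x. integral {-\<beta>..x} (\<lambda>t. 1 / a t)"
  assumes "0 \<le> \<alpha>" "\<alpha> < \<beta>"
  shows "H1_weak \<beta> (\<lambda>x. c\<^sub>0 + c\<^sub>1 * F (min x (-\<alpha>)) + c\<^sub>2 * (F (max x \<alpha>) - F \<alpha>))
    (\<lambda>x. c\<^sub>1 * (if x < -\<alpha> then 1 / a x else 0) + c\<^sub>2 * (if \<alpha> < x then 1 / a x else 0))"
    (is "H1_weak \<beta> ?u ?g")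
proof -
  obtain B where B: "\<And>x. x \<in> {-\<beta>..\<beta>} \<Longrightarrow> \<bar>1 / a x\<bar> \<le> B"
    using compact_imp_bounded[OF compact_continuous_image[OF continuous_on_inverse_a compact_Icc]]
    unfolding bounded_iff by fastforce
  show ?thesis
  proof (rule H1_weak_if_piecewise_derivative
      [where S = "{-\<alpha>, \<alpha>}" and B = "(\<bar>c\<^sub>1\<bar> + \<bar>c\<^sub>2\<bar>) * B"])
    have F_cont: "continuous_on {-\<beta>..\<beta>} F"
      unfolding F_def by (rule indefinite_integral_continuous_1[OF integrable_inverse_a])
    have "continuous_on {-\<beta>..\<beta>} (\<lambda>x. F (min x (-\<alpha>)))" "continuous_on {-\<beta>..\<beta>} (\<lambda>x. F (max x \<alpha>))"
      using \<open>0 \<le> \<alpha>\<close> \<open>\<alpha> < \<beta>\<close>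
      by (auto intro!: continuous_on_compose2[OF F_cont] continuous_on_min continuous_on_max
          continuous_on_id continuous_on_const)
    then show "continuous_on {-\<beta>..\<beta>} ?u"
      by (intro continuous_on_add continuous_on_mult_left continuous_on_diff continuous_on_const)
    show "(?u has_real_derivative ?g y) (at y)" if "y \<in> {-\<beta><..<\<beta>} - {-\<alpha>, \<alpha>}" for y
    proof -
      have F': "(F has_real_derivative 1 / a y) (at y)"
        unfolding F_def using that by (intro has_real_derivative_integral_inverse_a) auto
      have "(?u has_real_derivative
          0 + c\<^sub>1 * (if y < -\<alpha> then 1 / a y else 0)
            + c\<^sub>2 * ((if \<alpha> < y then 1 / a y else 0) - 0)) (at y)"
        using that F' by (intro DERIV_add DERIV_cmult DERIV_diff DERIV_const
            has_real_derivative_min_const has_real_derivative_max_const) auto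
      then show ?thesis by simp
    qed
    show "\<bar>?g x\<bar> \<le> (\<bar>c\<^sub>1\<bar> + \<bar>c\<^sub>2\<bar>) * B" if "x \<in> {-\<beta>..\<beta>}" for x
    proof -
      have "\<bar>?g x\<bar> \<le> \<bar>c\<^sub>1\<bar> * \<bar>1 / a x\<bar> + \<bar>c\<^sub>2\<bar> * \<bar>1 / a x\<bar>"
        using abs_triangle_ineq[of "c\<^sub>1 * _" "c\<^sub>2 * _"] \<open>0 \<le> \<alpha>\<close> by (auto simp: abs_mult)
      also have "\<dots> \<le> (\<bar>c\<^sub>1\<bar> + \<bar>c\<^sub>2\<bar>) * B"
        unfolding distrib_right by (intro add_mono mult_left_mono B that abs_ge_zero)
      finally show ?thesis .
    qed
  qed (use \<open>0 \<le> \<alpha>\<close> \<open>\<alpha> < \<beta>\<close> in auto)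
qed

lemma transition_profile:
  fixes m M \<alpha> \<beta> :: real
  defines "I\<^sub>1 \<equiv> integral {-\<beta>..-\<alpha>} (\<lambda>x. 1 / a x)" and "I\<^sub>2 \<equiv> integral {\<alpha>..\<beta>} (\<lambda>x. 1 / a x)"
  assumes "0 \<le> \<alpha>" "\<alpha> < \<beta>" "0 < I\<^sub>1" "0 < I\<^sub>2"
  obtains u g where "H1m m \<beta> u g"
    "\<And>x. x \<in> {-\<alpha>..\<alpha>} \<Longrightarrow> u x = M \<and> g x = 0"
    "\<And>x. x \<in> {-\<beta>..-\<alpha>} \<Longrightarrow> u x \<in> closed_segment (-m) M \<and> \<bar>g x\<bar> \<le> \<bar>m + M\<bar> / I\<^sub>1 / a x"
    "\<And>x. x \<in> {\<alpha>..\<beta>} \<Longrightarrow> u x \<in> closed_segment M m \<and> \<bar>g x\<bar> \<le> \<bar>m - M\<bar> / I\<^sub>2 / a x"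
proof -
  define F where "F x = integral {-\<beta>..x} (\<lambda>t. 1 / a t)" for x
  define c\<^sub>1 c\<^sub>2 where "c\<^sub>1 = (m + M) / I\<^sub>1" and "c\<^sub>2 = (m - M) / I\<^sub>2"
  define u where "u x = -m + c\<^sub>1 * F (min x (-\<alpha>)) + c\<^sub>2 * (F (max x \<alpha>) - F \<alpha>)" for x
  define g where
    "g x = c\<^sub>1 * (if x < -\<alpha> then 1 / a x else 0) + c\<^sub>2 * (if \<alpha> < x then 1 / a x else 0)" for x
  have F_diff: "F y - F x = integral {x..y} (\<lambda>t. 1 / a t)" if "-\<beta> \<le> x" "x \<le> y" for x y
    unfolding F_def
    using Henstock_Kurzweil_Integration.integral_combine[OF that integrable_inverse_a] by simp
  have F_mono: "F x \<le> F y" if "-\<beta> \<le> x" "x \<le> y" for x y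
    using F_diff[OF that] integral_inverse_a_nonneg[of x y] by simp
  have "F (-\<beta>) = 0" "F (-\<alpha>) = I\<^sub>1" "F \<beta> - F \<alpha> = I\<^sub>2"
    unfolding F_def I\<^sub>1_def I\<^sub>2_def using F_diff[of \<alpha> \<beta>] assms by (auto simp: F_def)
  then have "c\<^sub>1 * F (-\<alpha>) = m + M" "c\<^sub>2 * (F \<beta> - F \<alpha>) = m - M"
    using assms unfolding c\<^sub>1_def c\<^sub>2_def by auto
  have "H1_weak \<beta> u g"
    unfolding u_def g_def F_def using assms(3,4) by (rule H1_weak_clamped_primitive)
  moreover have "u (-\<beta>) = -m" "u \<beta> = m"
    unfolding u_def using assms \<open>F (-\<beta>) = 0\<close> \<open>c\<^sub>1 * F (-\<alpha>) = m + M\<close> \<open>c\<^sub>2 * (F \<beta> - F \<alpha>) = m - M\<close>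
    by auto
  moreover have "u x = M \<and> g x = 0" if "x \<in> {-\<alpha>..\<alpha>}" for x
    using that \<open>c\<^sub>1 * F (-\<alpha>) = m + M\<close> unfolding u_def g_def by auto
  moreover have "u x \<in> closed_segment (-m) M \<and> \<bar>g x\<bar> \<le> \<bar>m + M\<bar> / I\<^sub>1 / a x"
    if "x \<in> {-\<beta>..-\<alpha>}" for x
  proof
    have "0 \<le> F x / I\<^sub>1" "F x / I\<^sub>1 \<le> 1"
      using that assms F_mono[of "-\<beta>" x] F_mono[of x "-\<alpha>"] \<open>F (-\<beta>) = 0\<close> \<open>F (-\<alpha>) = I\<^sub>1\<close> by auto
    moreover have "min x (-\<alpha>) = x" "max x \<alpha> = \<alpha>" using that \<open>0 \<le> \<alpha>\<close> by auto
    then have "u x = -m + F x / I\<^sub>1 * (M - -m)"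
      unfolding u_def c\<^sub>1_def by simp
    ultimately show "u x \<in> closed_segment (-m) M" using add_mult_diff_in_closed_segment by metis
    show "\<bar>g x\<bar> \<le> \<bar>m + M\<bar> / I\<^sub>1 / a x"
      using that assms a_pos[of x] unfolding g_def c\<^sub>1_def
      by (auto simp: abs_mult abs_divide mult.commute)
  qed
  moreover have "u x \<in> closed_segment M m \<and> \<bar>g x\<bar> \<le> \<bar>m - M\<bar> / I\<^sub>2 / a x"
    if "x \<in> {\<alpha>..\<beta>}" for x
  proof
    have "0 \<le> (F x - F \<alpha>) / I\<^sub>2" "(F x - F \<alpha>) / I\<^sub>2 \<le> 1"
      using that assms F_mono[of \<alpha> x] F_mono[of x \<beta>] \<open>F \<beta> - F \<alpha> = I\<^sub>2\<close> by auto
    moreover have "min x (-\<alpha>) = -\<alpha>" "max x \<alpha> = x" using that \<open>0 \<le> \<alpha>\<close> by auto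
    then have "u x = M + (F x - F \<alpha>) / I\<^sub>2 * (m - M)"
      using \<open>c\<^sub>1 * F (-\<alpha>) = m + M\<close> unfolding u_def c\<^sub>2_def by simp
    ultimately show "u x \<in> closed_segment M m" using add_mult_diff_in_closed_segment by metis
    show "\<bar>g x\<bar> \<le> \<bar>m - M\<bar> / I\<^sub>2 / a x"
      using that assms a_pos[of x] unfolding g_def c\<^sub>2_def
      by (auto simp: abs_mult abs_divide mult.commute)
  qed
  ultimately show thesis
    using that unfolding H1m_def by blast
qed

lemma integral_energy_density_le:
  assumes H1: "H1_weak L u g" and sub: "{p..q} \<subseteq> {-L..L}"
    and g_le: "\<And>x. x \<in> {p..q} \<Longrightarrow> \<bar>g x\<bar> \<le> c / a x" and G_le: "\<And>x. x \<in> {p..q} \<Longrightarrow> G (u x) \<le> K"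
  shows "integral {p..q} (\<lambda>x. (1/2) * (g x)\<^sup>2 * a x + G (u x) * b x)
    \<le> c\<^sup>2 / 2 * integral {p..q} (\<lambda>x. 1 / a x) + K * integral {p..q} b"
proof -
  have "integral {p..q} (\<lambda>x. (1/2) * (g x)\<^sup>2 * a x + G (u x) * b x)
      \<le> integral {p..q} (\<lambda>x. c\<^sup>2 / 2 * (1 / a x) + K * b x)"
  proof (rule integral_le)
    show "(\<lambda>x. (1/2) * (g x)\<^sup>2 * a x + G (u x) * b x) integrable_on {p..q}"
      using kinetic_integrable[OF H1] potential_integrable[OF H1] sub
      by (intro integrable_add) (auto intro: integrable_subinterval_real)
    show "(\<lambda>x. c\<^sup>2 / 2 * (1 / a x) + K * b x) integrable_on {p..q}"
      by (intro integrable_add integrable_on_mult_left_real integrable_inverse_a integrable_b)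
    fix x assume x: "x \<in> {p..q}"
    have "(g x)\<^sup>2 \<le> (c / a x)\<^sup>2"
      using power_mono[OF g_le[OF x] abs_ge_zero, of 2] by simp
    then have "(1/2) * (g x)\<^sup>2 * a x \<le> (1/2) * (c / a x)\<^sup>2 * a x"
      using a_pos[of x] by simp
    also have "\<dots> = c\<^sup>2 / 2 * (1 / a x)"
      using a_pos[of x] by (simp add: power2_eq_square)
    finally have "(1/2) * (g x)\<^sup>2 * a x \<le> c\<^sup>2 / 2 * (1 / a x)" .
    moreover have "G (u x) * b x \<le> K * b x"
      using G_le[OF x] b_pos[of x] by (simp add: mult_right_mono less_imp_le)
    ultimately show "(1/2) * (g x)\<^sup>2 * a x + G (u x) * b x \<le> c\<^sup>2 / 2 * (1 / a x) + K * b x"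
      by linarith
  qed
  also have "\<dots> = c\<^sup>2 / 2 * integral {p..q} (\<lambda>x. 1 / a x) + K * integral {p..q} b"
    by (simp only: integral_add integrable_on_mult_left_real integrable_inverse_a integrable_b
        integral_mult_right)
  finally show ?thesis .
qed

lemma Phi_le_transition_energy:
  fixes m M \<alpha> \<beta> K :: real
  defines "I\<^sub>1 \<equiv> integral {-\<beta>..-\<alpha>} (\<lambda>x. 1 / a x)" and "I\<^sub>2 \<equiv> integral {\<alpha>..\<beta>} (\<lambda>x. 1 / a x)"
  assumes "0 \<le> \<alpha>" "\<alpha> < \<beta>" "0 < I\<^sub>1" "0 < I\<^sub>2" "G M = 0"
    and G_le: "\<And>s. s \<in> closed_segment (-m) M \<union> closed_segment M m \<Longrightarrow> G s \<le> K"
  shows "Phi a b G m \<beta>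
    \<le> (m + M)\<^sup>2 / (2 * I\<^sub>1) + (m - M)\<^sup>2 / (2 * I\<^sub>2) + K * (integral {-\<beta>..-\<alpha>} b + integral {\<alpha>..\<beta>} b)"
proof -
  obtain u g where H: "H1m m \<beta> u g"
    and mid: "\<And>x. x \<in> {-\<alpha>..\<alpha>} \<Longrightarrow> u x = M \<and> g x = 0"
    and left: "\<And>x. x \<in> {-\<beta>..-\<alpha>} \<Longrightarrow> u x \<in> closed_segment (-m) M \<and> \<bar>g x\<bar> \<le> \<bar>m + M\<bar> / I\<^sub>1 / a x"
    and right: "\<And>x. x \<in> {\<alpha>..\<beta>} \<Longrightarrow> u x \<in> closed_segment M m \<and> \<bar>g x\<bar> \<le> \<bar>m - M\<bar> / I\<^sub>2 / a x"
    using transition_profile[of \<alpha> \<beta> m M] assms(3-6) unfolding I\<^sub>1_def I\<^sub>2_def by blast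
  have H1: "H1_weak \<beta> u g" using H unfolding H1m_def by blast
  define h where "h x = (1/2) * (g x)\<^sup>2 * a x + G (u x) * b x" for x
  have h_int: "h integrable_on {-\<beta>..\<beta>}"
    unfolding h_def using kinetic_integrable[OF H1] potential_integrable[OF H1]
    by (rule integrable_add)
  have "integral {-\<alpha>..\<alpha>} h = integral {-\<alpha>..\<alpha>} (\<lambda>_. 0)"
    by (rule integral_cong) (use mid \<open>G M = 0\<close> in \<open>simp add: h_def\<close>)
  then have mid_zero: "integral {-\<alpha>..\<alpha>} h = 0" by simp
  have "h integrable_on {-\<beta>..\<alpha>}"
    using assms by (intro integrable_subinterval_real[OF h_int]) auto
  then have "integral {-\<beta>..-\<alpha>} h + integral {-\<alpha>..\<alpha>} h = integral {-\<beta>..\<alpha>} h"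
    using assms by (intro Henstock_Kurzweil_Integration.integral_combine) auto
  moreover have "integral {-\<beta>..\<alpha>} h + integral {\<alpha>..\<beta>} h = integral {-\<beta>..\<beta>} h"
    using assms h_int by (intro Henstock_Kurzweil_Integration.integral_combine) auto
  ultimately have "energy a b G \<beta> u g = integral {-\<beta>..-\<alpha>} h + integral {\<alpha>..\<beta>} h"
    using mid_zero unfolding energy_def h_def by linarith
  also have "\<dots> \<le> (\<bar>m + M\<bar> / I\<^sub>1)\<^sup>2 / 2 * I\<^sub>1 + K * integral {-\<beta>..-\<alpha>} b
      + ((\<bar>m - M\<bar> / I\<^sub>2)\<^sup>2 / 2 * I\<^sub>2 + K * integral {\<alpha>..\<beta>} b)"
    unfolding h_def I\<^sub>1_def I\<^sub>2_def using assms left right G_le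
    by (intro add_mono integral_energy_density_le[OF H1]) (auto simp: divide_inverse)
  also have "\<dots> = (m + M)\<^sup>2 / (2 * I\<^sub>1) + (m - M)\<^sup>2 / (2 * I\<^sub>2)
      + K * (integral {-\<beta>..-\<alpha>} b + integral {\<alpha>..\<beta>} b)"
    using assms by (simp add: power_divide field_simps power2_eq_square)
  finally show ?thesis
    using Phi_le_energy[OF H] by linarith
qed

lemma Phi_le_if_even:
  fixes m M K x y :: real
  assumes a_even: "\<And>x. a (-x) = a x" and b_even: "\<And>x. b (-x) = b x" and "G M = 0"
    and G_le: "\<And>s. s \<in> closed_segment (-m) M \<union> closed_segment M m \<Longrightarrow> G s \<le> K"
    and "0 \<le> x" "x < y" "0 < integral {x..y} (\<lambda>t. 1 / a t)"
  shows "Phi a b G m y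
    \<le> ((m + M)\<^sup>2 + (m - M)\<^sup>2) / 2 / integral {x..y} (\<lambda>t. 1 / a t) + 2 * K * integral {x..y} b"
proof -
  have "integral {-y..-x} (\<lambda>t. 1 / a t) = integral {x..y} (\<lambda>t. 1 / a t)"
    "integral {-y..-x} b = integral {x..y} b"
    using a_even b_even by (simp_all add: integral_reflect_even)
  then show ?thesis
    using Phi_le_transition_energy[where m = m and M = M and K = K,
        OF \<open>0 \<le> x\<close> \<open>x < y\<close> _ _ \<open>G M = 0\<close> G_le]
      \<open>0 < integral {x..y} (\<lambda>t. 1 / a t)\<close> by (simp add: add_divide_distrib)
qed

lemma Liminf_Phi_eq_0_if_intervals:
  fixes \<alpha> \<beta> :: "nat \<Rightarrow> real"
  assumes a_even: "\<And>x. a (-x) = a x" and b_even: "\<And>x. b (-x) = b x" and "G M = 0"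
    and "\<forall>n. \<alpha> n < \<beta> n"
    and "filterlim (\<lambda>n. integral {\<alpha> n..\<beta> n} (\<lambda>x. 1 / a x)) at_top sequentially"
    and "((\<lambda>n. integral {\<alpha> n..\<beta> n} b) \<longlongrightarrow> 0) sequentially"
  shows "Liminf at_top (\<lambda>L. ereal (Phi a b G m L)) = 0"
proof -
  obtain K where K: "\<And>s. s \<in> closed_segment (-m) M \<union> closed_segment M m \<Longrightarrow> G s \<le> K"
    using compact_imp_bounded[OF compact_continuous_image[OF continuous_on_subset[OF G_cont]
          compact_Un[OF compact_segment compact_segment]]]
    unfolding bounded_iff by (metis abs_le_D1 image_eqI real_norm_def subset_UNIV)
  have "\<And>t. 1 / a (-t) = 1 / a t" "\<And>t. 0 \<le> 1 / a t" "\<And>t. 0 \<le> b t"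
    using a_even a_pos b_pos by (simp_all add: less_imp_le)
  then obtain x y where xy: "\<And>n. 0 \<le> x n" "\<And>n. x n < y n"
    and y_top: "filterlim y at_top sequentially"
    and A: "filterlim (\<lambda>n. integral {x n..y n} (\<lambda>t. 1 / a t)) at_top sequentially"
    and B: "(\<lambda>n. integral {x n..y n} b) \<longlonglongrightarrow> 0"
    using halfline_interval_sequence_if_even[OF continuous_on_inverse_a _ _ b_cont b_even]
      assms(4-6) by blast
  let ?bound = "\<lambda>n. ((m + M)\<^sup>2 + (m - M)\<^sup>2) / 2 / integral {x n..y n} (\<lambda>t. 1 / a t)
    + 2 * K * integral {x n..y n} b"
  have "eventually (\<lambda>n. 0 < integral {x n..y n} (\<lambda>t. 1 / a t)) sequentially"
    using A unfolding filterlim_at_top_dense by blast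
  then have "eventually (\<lambda>n. Phi a b G m (y n) \<le> ?bound n) sequentially"
    by eventually_elim (rule Phi_le_if_even[OF a_even b_even \<open>G M = 0\<close> K xy])
  moreover have "?bound \<longlonglongrightarrow> 0"
    using tendsto_divide_0[OF tendsto_const filterlim_at_top_imp_at_infinity[OF A]]
      tendsto_mult_right_zero[OF B] by (intro tendsto_add_zero)
  ultimately show ?thesis
    by (rule Liminf_at_top_ereal_eq_0_if_bounded_along[OF eventually_Phi_nonneg y_top])
qed

end

theorem proposition5p9:
  fixes a b G :: "real \<Rightarrow> real" and M m :: real
  assumes "continuous_on UNIV a" "continuous_on UNIV b" "continuous_on UNIV G"
    and "\<And>x. a (-x) = a x" "\<And>x. b (-x) = b x" "\<And>x. G (-x) = G x"
    and "\<And>x. a x > 0" "\<And>x. b x > 0"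
    and "M > 0" "G M = 0" "\<And>s. G s \<ge> G M" "\<And>s. 0 \<le> s \<Longrightarrow> s < M \<Longrightarrow> G s > 0"
    and "m > 0"
  shows "Liminf at_top (\<lambda>L. ereal (Phi a b G m L)) = 0 \<longleftrightarrow>
    (\<exists>\<alpha> \<beta> :: nat \<Rightarrow> real. (\<forall>n. \<alpha> n < \<beta> n) \<and>
       filterlim (\<lambda>n. integral {\<alpha> n..\<beta> n} (\<lambda>x. 1 / a x)) at_top sequentially \<and>
       ((\<lambda>n. integral {\<alpha> n..\<beta> n} b) \<longlongrightarrow> 0) sequentially)"
proof -
  have "\<And>s. 0 \<le> G s" using assms(10,11) by metis
  then interpret weighted_energy a b G
    using assms(1-3,7,8) by unfold_locales
  show ?thesis
    using intervals_if_Liminf_Phi_eq_0[OF assms(13,9,12)]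
      Liminf_Phi_eq_0_if_intervals[OF assms(4,5,10)] by blast
qed

end
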